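(* Let $S_{1,n-3}$ be the tree with vertices $v_0,v_1,\dots,v_{n-1}$ and edges $e_1=\{v_0,v_1\}$, $e_2=\{v_1,v_2\}$, $e_i=\{v_2,v_i\}$ for $3\le i\le n-1$. Let $B_1=\{e_1,\dots,e_{n-1},f_1,f_2\}$ with $f_1=\{v_0,v_2\}$, $f_2=\{v_1,v_3\}$, and $B_2=\{e_1,\dots,e_{n-1},f_1,f_2\}$ with $f_1=\{v_0,v_2\}$, $f_2=\{v_3,v_4\}$. Then: (1) the eigenvalues of $\mathfrak{D}_2(S_{1,n-3})[B_1,B_1]$ are $-1$ with multiplicity $n-5$ and the roots of $h_1(x)=x^6-2(n-1)x^5-3(7n-12)x^4-18(3n-7)x^3-5(9n-22)x^2-(13n-28)x-(n-1)$; (2) the eigenvalues of $\mathfrak{D}_2(S_{1,n-3})[B_2,B_2]$ are $-1$ with multiplicity $n-5$ and the roots of $h_2(x)=x^6-2(n-1)x^5-(21n-22)x^4-(62n-141)x^3-(53n-133)x^2-(15n-34)x-(n-1)$.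
   Context: For a tree $T$, let $\mathcal{V}_2$ be the set of 2-element vertex subsets (edges regarded as elements of $\mathcal{V}_2$). The 2-Steiner distance matrix $\mathfrak{D}_2(T)$ is indexed by $\mathcal{V}_2$, with entry in row $\{i,j\}$, column $\{k,l\}$ equal to the minimum number of edges of a connected subtree of $T$ whose vertex set contains $i,j,k,l$. $M[B,B]$ denotes the principal submatrix with rows and columns indexed by $B$. *)

theory Defs
  imports "Jordan_Normal_Form.Char_Poly"
begin

text \<open>A graph is given by its edge set, each edge a 2-element set of vertices.\<close>

definition edge_rel :: "'v set set \<Rightarrow> ('v \<times> 'v) set" where
  "edge_rel F = {(u, v). {u, v} \<in> F}"

definition connected_with :: "'v set set \<Rightarrow> 'v set \<Rightarrow> bool" where
  "connected_with F S \<longleftrightarrow>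
     (\<forall>u \<in> \<Union>F \<union> S. \<forall>v \<in> \<Union>F \<union> S. (u, v) \<in> (edge_rel F)\<^sup>*)"

definition steiner_dist :: "'v set set \<Rightarrow> 'v set \<Rightarrow> nat" where
  "steiner_dist E S = (LEAST k. \<exists>F \<subseteq> E. card F = k \<and> connected_with F S)"

text \<open>Entry of the 2-Steiner distance matrix in row {i,j}, column {k,l}.\<close>

definition steiner2 :: "'v set set \<Rightarrow> 'v set \<Rightarrow> 'v set \<Rightarrow> nat" where
  "steiner2 E p q = steiner_dist E (p \<union> q)"

text \<open>Principal submatrix of the 2-Steiner distance matrix with rows/columns
  indexed by the elements of B, listed (without repetition) in the list bs.\<close>

definition steiner2_submatrix :: "'v set set \<Rightarrow> 'v set list \<Rightarrow> real mat" where
  "steiner2_submatrix E bs =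
     mat (length bs) (length bs) (\<lambda>(i, j). real (steiner2 E (bs ! i) (bs ! j)))"

text \<open>The tree S_{1,n-3} on vertices 0..n-1 (v_i = i):
  e_1 = {0,1}, e_2 = {1,2}, e_i = {2,i} for 3 <= i <= n-1.\<close>

definition tree_edge :: "nat \<Rightarrow> nat set" where
  "tree_edge i = (if i = 1 then {0, 1} else if i = 2 then {1, 2} else {2, i})"

definition S1 :: "nat \<Rightarrow> nat set set" where
  "S1 n = tree_edge ` {1..n - 1}"

definition B1_list :: "nat \<Rightarrow> nat set list" where
  "B1_list n = map tree_edge [1..<n] @ [{0, 2}, {1, 3}]"

definition B2_list :: "nat \<Rightarrow> nat set list" where
  "B2_list n = map tree_edge [1..<n] @ [{0, 2}, {3, 4}]"

definition h1 :: "nat \<Rightarrow> real poly" where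
  "h1 n = [: -(real n - 1), -(13 * real n - 28), -5 * (9 * real n - 22),
             -18 * (3 * real n - 7), -3 * (7 * real n - 12), -2 * (real n - 1), 1 :]"

definition h2 :: "nat \<Rightarrow> real poly" where
  "h2 n = [: -(real n - 1), -(15 * real n - 34), -(53 * real n - 133),
             -(62 * real n - 141), -(21 * real n - 22), -2 * (real n - 1), 1 :]"

end

theory Submission
  imports Defs
begin

(* For a vertex set U with at least two elements, the minimal subtree of S_{1,n-3} spanning U
   consists of {0,1} if 0 is in U, of {1,2} if U meets both {0,1} and {2,3,...}, and of {2,i} for
   every i >= 3 in U; so every entry of D_2[B,B] has a closed form.
   The pendant edges {2,i} lying in no extra pair of B are twins: their rows and columns agree
   outside the twin block, on which D_2 is I + 2 (J - I). Merging m twins splits off the factor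
   (x + 1)^(m - 1) of the characteristic polynomial and leaves a quotient matrix of size 6 (for
   B_1) or 7 (for B_2, contributing one more factor x + 1) whose characteristic polynomial is
   evaluated symbolically in n. For B_2 and n = 5 there are no twins and the 6 x 6 matrix is
   evaluated directly. *)

section \<open>Steiner distances in S_{1,n-3}\<close>

lemma mem_edge_rel_iff [simp]: "(a, b) \<in> edge_rel F \<longleftrightarrow> {a, b} \<in> F"
  by (simp add: edge_rel_def)

lemma sym_edge_rel: "sym (edge_rel F)"
  unfolding sym_def by (simp add: insert_commute)

lemma rtrancl_exits_set:
  assumes "(u, v) \<in> r\<^sup>*" "u \<in> X" "v \<notin> X"
  shows "\<exists>a b. (a, b) \<in> r \<and> a \<in> X \<and> b \<notin> X"
  using assms by (induction rule: rtrancl_induct) auto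

lemma connected_with_crossing_edge:
  assumes "connected_with F U" "u \<in> U" "u \<in> X" "v \<in> U" "v \<notin> X"
  shows "\<exists>e\<in>F. e \<inter> X \<noteq> {} \<and> \<not> e \<subseteq> X"
proof -
  have "(u, v) \<in> (edge_rel F)\<^sup>*"
    using assms(1,2,4) unfolding connected_with_def by blast
  then obtain a b where "{a, b} \<in> F" "a \<in> X" "b \<notin> X"
    using assms(3,5) rtrancl_exits_set[of u v "edge_rel F" X] by auto
  then show ?thesis
    by (intro bexI[of _ "{a, b}"]) auto
qed

lemma S1E:
  assumes "e \<in> S1 n"
  obtains "e = {0, 1}" | "e = {1, 2}" | i where "3 \<le> i" "i < n" "e = {2, i}"
proof -
  obtain j where j: "1 \<le> j" "j < n" "e = tree_edge j"
    using assms unfolding S1_def by force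
  consider "j = 1" | "j = 2" | "3 \<le> j"
    using j(1) by linarith
  then show thesis
    using that j unfolding tree_edge_def by cases auto
qed

lemma S1I:
  assumes "3 \<le> n"
  shows "{0, 1} \<in> S1 n" "{1, 2} \<in> S1 n" "\<And>i. 3 \<le> i \<Longrightarrow> i < n \<Longrightarrow> {2, i} \<in> S1 n"
proof -
  have mem: "tree_edge j \<in> S1 n" if "1 \<le> j" "j < n" for j
    using that unfolding S1_def by auto
  show "{0, 1} \<in> S1 n" "{1, 2} \<in> S1 n"
    using mem[of 1] mem[of 2] assms by (simp_all add: tree_edge_def)
  show "{2, i} \<in> S1 n" if "3 \<le> i" "i < n" for i
    using mem[of i] that by (simp add: tree_edge_def)
qed

definition S1_subtree :: "nat set \<Rightarrow> nat set set" where
  "S1_subtree U =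
     (if 0 \<in> U then {{0, 1}} else {}) \<union>
     (if (0 \<in> U \<or> 1 \<in> U) \<and> (\<exists>v\<in>U. 2 \<le> v) then {{1, 2}} else {}) \<union>
     (\<lambda>i. {2, i}) ` (U \<inter> {3..})"

definition S1_steiner :: "nat set \<Rightarrow> nat" where
  "S1_steiner U =
     (if 0 \<in> U then 1 else 0) +
     (if (0 \<in> U \<or> 1 \<in> U) \<and> (\<exists>v\<in>U. 2 \<le> v) then 1 else 0) +
     card (U \<inter> {3..})"

lemma S1_subtree_subset:
  assumes "3 \<le> n" "U \<subseteq> {0..<n}"
  shows "S1_subtree U \<subseteq> S1 n"
  using assms S1I unfolding S1_subtree_def by (auto simp: subset_iff)

lemma card_S1_subtree:
  assumes "finite U"
  shows "card (S1_subtree U) = S1_steiner U"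
proof -
  let ?P = "(\<lambda>i. {2, i}) ` (U \<inter> {3..})"
  have "card ?P = card (U \<inter> {3..})"
    by (rule card_image, rule inj_onI) (simp add: doubleton_eq_iff)
  moreover have "{0, 1} \<notin> ?P" "{1, 2} \<notin> ?P" "{0, 1} \<noteq> {1, 2::nat}"
    by (force simp: doubleton_eq_iff image_iff)+
  moreover have "finite ?P"
    using assms by simp
  ultimately show ?thesis
    unfolding S1_subtree_def S1_steiner_def using assms by (simp add: card_insert_if)
qed

lemma S1_subtree_minimal:
  assumes F: "F \<subseteq> S1 n" and conn: "connected_with F U"
    and uv: "u \<in> U" "v \<in> U" "u \<noteq> v"
  shows "S1_subtree U \<subseteq> F"
proof -
  have other: "\<exists>w\<in>U. w \<notin> {z}" for z
    using uv by (cases "u = z") auto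
  have crossing: "\<exists>e\<in>F. e \<inter> X \<noteq> {} \<and> \<not> e \<subseteq> X \<and> e \<in> S1 n"
    if "w \<in> U" "w \<in> X" "z \<in> U" "z \<notin> X" for w z X
    using connected_with_crossing_edge[OF conn that] F by blast
  have "{0, 1} \<in> F" if zero: "0 \<in> U"
  proof -
    obtain w where "w \<in> U" "w \<notin> {0}"
      using other[of 0] by blast
    then obtain e where "e \<in> S1 n" "e \<in> F" "e \<inter> {0} \<noteq> {}" "\<not> e \<subseteq> {0}"
      using crossing[of 0 "{0}" w] zero by blast
    then show ?thesis
      by (cases rule: S1E) auto
  qed
  moreover have "{1, 2} \<in> F" if low: "0 \<in> U \<or> 1 \<in> U" and high: "\<exists>v\<in>U. 2 \<le> v"
  proof -
    obtain w where w: "w \<in> U" "w \<in> {0, 1}"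
      using low by blast
    obtain z where z: "z \<in> U" "z \<notin> {0, 1}"
      using high by fastforce
    obtain e where "e \<in> S1 n" "e \<in> F" "e \<inter> {0, 1} \<noteq> {}" "\<not> e \<subseteq> {0, 1}"
      using crossing[OF w z] by blast
    then show ?thesis
      by (cases rule: S1E) auto
  qed
  moreover have "{2, i} \<in> F" if leaf: "i \<in> U" "3 \<le> i" for i
  proof -
    obtain w where "w \<in> U" "w \<notin> {i}"
      using other[of i] by blast
    then obtain e where "e \<in> S1 n" "e \<in> F" "e \<inter> {i} \<noteq> {}" "\<not> e \<subseteq> {i}"
      using crossing[of i "{i}" w] leaf(1) by blast
    then show ?thesis
      using leaf(2) by (cases rule: S1E) auto
  qed
  ultimately show ?thesis
    unfolding S1_subtree_def by auto
qed

lemma connected_with_S1_subtree: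
  assumes "u \<in> U" "v \<in> U" "u \<noteq> v"
  shows "connected_with (S1_subtree U) U"
proof (cases "\<exists>v\<in>U. 2 \<le> v")
  case True
  let ?R = "edge_rel (S1_subtree U)"
  have to_hub: "(w, 2) \<in> ?R\<^sup>*" if w: "w \<in> \<Union>(S1_subtree U) \<union> U" for w
  proof -
    consider "w = 0" | "w = 1" | "w = 2" | "3 \<le> w"
      by linarith
    then show ?thesis
    proof cases
      case 1
      with w True have "(0, 1) \<in> ?R" "(1, 2) \<in> ?R"
        unfolding S1_subtree_def by (auto split: if_splits)
      with 1 show ?thesis
        by (meson converse_rtrancl_into_rtrancl r_into_rtrancl)
    next
      case 2
      with w True have "(1, 2) \<in> ?R"
        unfolding S1_subtree_def by (auto split: if_splits)
      with 2 show ?thesis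
        by blast
    next
      case 4
      with w have "(w, 2) \<in> ?R"
        unfolding S1_subtree_def by (auto simp: insert_commute split: if_splits)
      then show ?thesis
        by blast
    qed simp
  qed
  have "sym (?R\<^sup>*)"
    by (rule sym_rtrancl[OF sym_edge_rel])
  then show ?thesis
    unfolding connected_with_def by (metis rtrancl_trans symD to_hub)
next
  case False
  then have "U \<subseteq> {0, 1}"
    by (auto simp: not_le)
  moreover from this assms have "{u, v} = {0, 1}"
    by auto
  ultimately have "U = {0, 1}"
    using assms by blast
  then show ?thesis
    unfolding connected_with_def S1_subtree_def by (auto simp: insert_commute)
qed

lemma steiner_dist_S1:
  assumes "3 \<le> n" "U \<subseteq> {0..<n}" "u \<in> U" "v \<in> U" "u \<noteq> v"
  shows "steiner_dist (S1 n) U = S1_steiner U"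
  unfolding steiner_dist_def
proof (rule Least_equality)
  have "finite U"
    using assms(2) finite_subset by blast
  then show "\<exists>F\<subseteq>S1 n. card F = S1_steiner U \<and> connected_with F U"
    using assms S1_subtree_subset card_S1_subtree connected_with_S1_subtree
    by (intro exI[of _ "S1_subtree U"]) simp
next
  fix k assume "\<exists>F\<subseteq>S1 n. card F = k \<and> connected_with F U"
  then obtain F where F: "F \<subseteq> S1 n" "card F = k" "connected_with F U"
    by blast
  have "finite F"
    using F(1) finite_subset unfolding S1_def by blast
  then have "card (S1_subtree U) \<le> k"
    using S1_subtree_minimal[OF F(1,3) assms(3-5)] F(2) card_mono by blast
  moreover have "finite U"
    using assms(2) finite_subset by blast
  ultimately show "S1_steiner U \<le> k"
    using card_S1_subtree by simp
qed

lemma steiner2_S1: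
  assumes "3 \<le> n" "card P = 2" "P \<subseteq> {0..<n}" "Q \<subseteq> {0..<n}"
  shows "steiner2 (S1 n) P Q = S1_steiner (P \<union> Q)"
proof -
  obtain p q where "P = {p, q}" "p \<noteq> q"
    using card_2_iff[THEN iffD1, OF assms(2)] by blast
  then show ?thesis
    unfolding steiner2_def using assms by (intro steiner_dist_S1[of n "P \<union> Q" p q]) auto
qed

lemma tree_edge_pair:
  assumes "1 \<le> i" "i < n"
  shows "card (tree_edge i) = 2 \<and> tree_edge i \<subseteq> {0..<n}"
  using assms unfolding tree_edge_def by (simp add: card_insert_if)

lemma tree_edges_pairs: "\<forall>P\<in>set (map tree_edge [1..<n]). card P = 2 \<and> P \<subseteq> {0..<n}"
  using tree_edge_pair by fastforce

lemma B1_list_pairs: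
  assumes "4 \<le> n"
  shows "\<forall>P\<in>set (B1_list n). card P = 2 \<and> P \<subseteq> {0..<n}"
  using assms tree_edges_pairs[of n] unfolding B1_list_def by simp

lemma B2_list_pairs:
  assumes "5 \<le> n"
  shows "\<forall>P\<in>set (B2_list n). card P = 2 \<and> P \<subseteq> {0..<n}"
  using assms tree_edges_pairs[of n] unfolding B2_list_def by simp

section \<open>Merging twin rows and columns\<close>

lemma det_mat_permute:
  fixes f :: "nat \<Rightarrow> nat \<Rightarrow> 'a::comm_ring_1"
  assumes p: "p permutes {0..<N}"
  shows "det (mat N N (\<lambda>(i, j). f (p i) (p j))) = det (mat N N (\<lambda>(i, j). f i j))"
proof -
  have pN: "p i < N" if "i < N" for i
    using p that permutes_in_image by fastforce
  define A where "A = mat N N (\<lambda>(i, j). f i (p j))"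
  define B where "B = mat N N (\<lambda>(i, j). f j i)"
  have A: "A \<in> carrier_mat N N" and B: "B \<in> carrier_mat N N"
    unfolding A_def B_def by simp_all
  have "mat N N (\<lambda>(i, j). f (p i) (p j)) = mat N N (\<lambda>(i, j). A $$ (p i, j))"
    by (rule eq_matI) (auto simp: A_def pN)
  then have rows: "det (mat N N (\<lambda>(i, j). f (p i) (p j))) = signof p * det A"
    using det_permute_rows[OF A p] by simp
  have "transpose_mat A = mat N N (\<lambda>(i, j). B $$ (p i, j))"
    by (rule eq_matI) (auto simp: A_def B_def pN)
  then have "det A = signof p * det B"
    using det_transpose[OF A] det_permute_rows[OF B p] by simp
  also have "B = transpose_mat (mat N N (\<lambda>(i, j). f i j))"
    by (rule eq_matI) (auto simp: B_def)
  also have "det \<dots> = det (mat N N (\<lambda>(i, j). f i j))"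
    by (rule det_transpose[of _ N]) simp
  finally have "det A = signof p * det (mat N N (\<lambda>(i, j). f i j))" .
  moreover have "signof p * signof p = (1::'a)"
    by (cases "sign p = 1") (auto simp: sign_def)
  ultimately show ?thesis
    using rows by (simp add: mult.assoc[symmetric])
qed

(* Moves the block of indices c ..< g + c to the front. *)
definition block_swap :: "nat \<Rightarrow> nat \<Rightarrow> nat \<Rightarrow> nat" where
  "block_swap c g t = (if t < g then t + c else if t < g + c then t - g else t)"

lemma block_swap_permutes:
  assumes "g + c \<le> N"
  shows "block_swap c g permutes {0..<N}"
proof (rule bij_imp_permutes)
  let ?q = "\<lambda>u. if u < c then u + g else if u < g + c then u - c else u"
  show "bij_betw (block_swap c g) {0..<N} {0..<N}"
    by (rule bij_betw_byWitness[where f' = ?q]) (use assms in \<open>auto simp: block_swap_def\<close>)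
  show "block_swap c g x = x" if "x \<notin> {0..<N}" for x
    using assms that by (auto simp: block_swap_def)
qed

definition shear_mat :: "nat \<Rightarrow> nat \<Rightarrow> nat \<Rightarrow> 'a \<Rightarrow> 'a::comm_ring_1 mat" where
  "shear_mat N g s e = mat N N (\<lambda>(i, j). (if i = j then 1 else 0) + (if i < g \<and> j = s then e else 0))"

lemma dim_shear_mat [simp]:
  "dim_row (shear_mat N g s e) = N" "dim_col (shear_mat N g s e) = N"
  by (simp_all add: shear_mat_def)

lemma shear_mat_carrier [simp]: "shear_mat N g s e \<in> carrier_mat N N"
  by (simp add: carrier_matI)

lemma det_shear_mat:
  assumes "g \<le> s"
  shows "det (shear_mat N g s e) = 1"
proof -
  have "upper_triangular (shear_mat N g s e)"
    using assms by (auto simp: upper_triangular_def shear_mat_def)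
  moreover have "diag_mat (shear_mat N g s e) = replicate N 1"
    using assms by (intro nth_equalityI) (auto simp: diag_mat_def shear_mat_def)
  ultimately show ?thesis
    by (simp add: det_upper_triangular[of _ N])
qed

lemma shear_mat_mult:
  assumes "D \<in> carrier_mat N N" "i < N" "j < N" "s < N"
  shows "(shear_mat N g s e * D) $$ (i, j) = D $$ (i, j) + (if i < g then e * D $$ (s, j) else 0)"
proof -
  have "(shear_mat N g s e * D) $$ (i, j) =
      (\<Sum>k\<in>{0..<N}. (if k = i then D $$ (k, j) else 0) +
                      (if k = s then (if i < g then e * D $$ (k, j) else 0) else 0))"
    using assms by (auto simp: shear_mat_def scalar_prod_def distrib_right intro!: sum.cong)
  also have "\<dots> = D $$ (i, j) + (if i < g then e * D $$ (s, j) else 0)"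
    using assms by (simp add: sum.distrib sum.delta)
  finally show ?thesis .
qed

lemma mult_shear_mat:
  assumes "D \<in> carrier_mat N N" "i < N" "j < N" "g \<le> N"
  shows "(D * shear_mat N g s e) $$ (i, j) =
           D $$ (i, j) + (if j = s then e * (\<Sum>k<g. D $$ (i, k)) else 0)"
proof -
  have "(D * shear_mat N g s e) $$ (i, j) =
      (\<Sum>k\<in>{0..<N}. (if k = j then D $$ (i, k) else 0) +
                      (if k < g then (if j = s then e * D $$ (i, k) else 0) else 0))"
    using assms by (auto simp: shear_mat_def scalar_prod_def distrib_left intro!: sum.cong)
  also have "\<dots> =
      D $$ (i, j) + (\<Sum>k\<in>{0..<N} \<inter> {k. k < g}. if j = s then e * D $$ (i, k) else 0)"
    using assms by (simp add: sum.distrib sum.delta' sum.inter_restrict)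
  also have "{0..<N} \<inter> {k. k < g} = {..<g}"
    using assms by auto
  finally show ?thesis
    by (simp add: sum_distrib_left)
qed

lemma shear_conj_entry:
  assumes D: "D \<in> carrier_mat N N" and "i < N" "j < N" "g \<le> s" "s < N"
  shows "(shear_mat N g s (-1) * D * shear_mat N g s 1) $$ (i, j) =
           D $$ (i, j) - (if i < g then D $$ (s, j) else 0) +
           (if j = s then \<Sum>k<g. D $$ (i, k) - (if i < g then D $$ (s, k) else 0) else 0)"
proof -
  have LD: "shear_mat N g s (-1) * D \<in> carrier_mat N N"
    using D by (simp add: mult_carrier_mat[of _ N N])
  have "k < N" if "k < g" for k
    using that assms(4,5) by linarith
  then have "(\<Sum>k<g. (shear_mat N g s (-1) * D) $$ (i, k)) =
      (\<Sum>k<g. D $$ (i, k) - (if i < g then D $$ (s, k) else 0))"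
    using assms by (intro sum.cong) (simp_all add: shear_mat_mult del: index_mult_mat)
  then show ?thesis
    using assms mult_shear_mat[OF LD] by (simp add: shear_mat_mult del: index_mult_mat)
qed

definition twin_quotient ::
    "nat \<Rightarrow> nat \<Rightarrow> nat \<Rightarrow> 'a \<Rightarrow> 'a \<Rightarrow> (nat \<Rightarrow> nat \<Rightarrow> 'a) \<Rightarrow> 'a::comm_ring_1 mat" where
  "twin_quotient g c s0 a b d = mat c c (\<lambda>(t, u).
     if u = s0 then (if t = s0 then a + of_nat g * b else (of_nat g + 1) * d (g + t) (g + s0))
     else d (g + t) (g + u))"

(* Subtracting the representative row g + s0 from the twin rows and then adding the twin columns to
   column g + s0 makes the matrix block lower triangular with upper left block (a - b) I. *)
lemma shear_twin_mat_blocks: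
  fixes d :: "nat \<Rightarrow> nat \<Rightarrow> 'a::comm_ring_1"
  assumes "s0 < c"
    and twins: "\<And>t u. t < g \<Longrightarrow> u < g \<Longrightarrow> d t u = (if t = u then a else b)"
    and rep: "d (g + s0) (g + s0) = a"
    and row: "\<And>t u. t < g \<Longrightarrow> u < c \<Longrightarrow>
      d t (g + u) = (if u = s0 then b else d (g + s0) (g + u))"
    and col: "\<And>t u. t < g \<Longrightarrow> u < c \<Longrightarrow>
      d (g + u) t = (if u = s0 then b else d (g + u) (g + s0))"
  obtains C3 where "C3 \<in> carrier_mat c g"
    "shear_mat (g + c) g (g + s0) (-1) * mat (g + c) (g + c) (\<lambda>(i, j). d i j) *
       shear_mat (g + c) g (g + s0) 1 =
     four_block_mat ((a - b) \<cdot>\<^sub>m 1\<^sub>m g) (0\<^sub>m g c) C3 (twin_quotient g c s0 a b d)"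
proof -
  let ?N = "g + c" and ?s = "g + s0"
  define D where "D = mat ?N ?N (\<lambda>(i, j). d i j)"
  define C where "C = shear_mat ?N g ?s (-1) * D * shear_mat ?N g ?s 1"
  have D: "D \<in> carrier_mat ?N ?N"
    by (simp add: D_def)
  have C_entry: "C $$ (i, j) = d i j - (if i < g then d ?s j else 0) +
      (if j = ?s then \<Sum>k<g. d i k - (if i < g then d ?s k else 0) else 0)"
    if "i < ?N" "j < ?N" for i j
  proof -
    have "C $$ (i, j) = D $$ (i, j) - (if i < g then D $$ (?s, j) else 0) +
        (if j = ?s then \<Sum>k<g. D $$ (i, k) - (if i < g then D $$ (?s, k) else 0) else 0)"
      unfolding C_def using that assms(1) by (intro shear_conj_entry[OF D]) simp_all
    moreover have "(\<Sum>k<g. D $$ (i, k) - (if i < g then D $$ (?s, k) else 0)) =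
        (\<Sum>k<g. d i k - (if i < g then d ?s k else 0))"
      using that assms(1) by (intro sum.cong) (simp_all add: D_def)
    ultimately show ?thesis
      using that assms(1) by (simp add: D_def)
  qed
  have top_sum: "(\<Sum>k<g. d t k - d ?s k) = a - b" if "t < g" for t
  proof -
    have "(\<Sum>k<g. d t k - d ?s k) = (\<Sum>k<g. if k = t then a - b else 0)"
      using that twins col[OF _ assms(1)] by (intro sum.cong) simp_all
    then show ?thesis
      using that by simp
  qed
  have bottom_sum: "(\<Sum>k<g. d (g + t) k) = of_nat g * (if t = s0 then b else d (g + t) ?s)"
    if "t < c" for t
    using that col by simp
  define C3 where "C3 = mat c g (\<lambda>(t, u). C $$ (g + t, u))"
  let ?B = "four_block_mat ((a - b) \<cdot>\<^sub>m 1\<^sub>m g) (0\<^sub>m g c) C3 (twin_quotient g c s0 a b d)"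
  have "C = ?B"
  proof (rule eq_matI)
    fix i j assume "i < dim_row ?B" "j < dim_col ?B"
    then have ij: "i < ?N" "j < ?N"
      by (auto simp: C3_def twin_quotient_def)
    show "C $$ (i, j) = ?B $$ (i, j)"
    proof (cases "i < g")
      case True
      then show ?thesis
        using ij C_entry[OF ij] top_sum[OF True] twins row col[OF _ assms(1)] rep
        by (cases "j < g") (auto simp: twin_quotient_def not_less dest!: le_Suc_ex)
    next
      case False
      then obtain t where t: "i = g + t" "t < c"
        using ij(1) le_Suc_ex not_less by fastforce
      then show ?thesis
        using ij C_entry[OF ij] bottom_sum[OF t(2)] rep
        by (cases "j < g")
          (auto simp: C3_def twin_quotient_def ring_distribs add.commute dest!: le_Suc_ex)
    qed
  qed (auto simp: C_def C3_def twin_quotient_def)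
  moreover have "C3 \<in> carrier_mat c g"
    by (simp add: C3_def)
  ultimately show thesis
    using that unfolding C_def D_def by blast
qed

lemma det_twin_reduction:
  fixes d :: "nat \<Rightarrow> nat \<Rightarrow> 'a::idom"
  assumes "s0 < c"
    and twins: "\<And>t u. t < g \<Longrightarrow> u < g \<Longrightarrow> d t u = (if t = u then a else b)"
    and rep: "d (g + s0) (g + s0) = a"
    and row: "\<And>t u. t < g \<Longrightarrow> u < c \<Longrightarrow>
      d t (g + u) = (if u = s0 then b else d (g + s0) (g + u))"
    and col: "\<And>t u. t < g \<Longrightarrow> u < c \<Longrightarrow>
      d (g + u) t = (if u = s0 then b else d (g + u) (g + s0))"
  shows "det (mat (g + c) (g + c) (\<lambda>(i, j). d i j)) =
           (a - b) ^ g * det (twin_quotient g c s0 a b d)"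
proof -
  let ?N = "g + c" and ?s = "g + s0"
  define D where "D = mat ?N ?N (\<lambda>(i, j). d i j)"
  let ?B = "\<lambda>C3. four_block_mat ((a - b) \<cdot>\<^sub>m 1\<^sub>m g) (0\<^sub>m g c) C3 (twin_quotient g c s0 a b d)"
  obtain C3 where C3: "C3 \<in> carrier_mat c g"
    and blocks: "shear_mat ?N g ?s (-1) * D * shear_mat ?N g ?s 1 = ?B C3"
    using shear_twin_mat_blocks[OF assms] unfolding D_def by blast
  have D: "D \<in> carrier_mat ?N ?N"
    unfolding D_def by simp
  then have "shear_mat ?N g ?s (-1) * D \<in> carrier_mat ?N ?N"
    by (simp add: mult_carrier_mat[of _ ?N ?N])
  with D have "det (shear_mat ?N g ?s (-1) * D * shear_mat ?N g ?s 1) = det D"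
    by (simp add: det_mult[of _ ?N] det_shear_mat)
  moreover have "det (?B C3) = (a - b) ^ g * det (twin_quotient g c s0 a b d)"
    using C3 by (simp add: det_four_block_mat_upper_right_zero[of _ g _ c] twin_quotient_def)
  ultimately show ?thesis
    using blocks by (simp add: D_def)
qed

section \<open>Determinants of explicit matrices\<close>

definition remove_nth :: "nat \<Rightarrow> 'a list \<Rightarrow> 'a list" where
  "remove_nth j xs = take j xs @ drop (Suc j) xs"

fun det_list :: "'a::comm_ring_1 list list \<Rightarrow> 'a" where
  "det_list [] = 1"
| "det_list (r # rs) =
     sum_list (map (\<lambda>j. (-1) ^ j * r ! j * det_list (map (remove_nth j) rs)) [0..<length r])"

declare det_list.simps(2) [simp del]

lemma mat_to_list_mat_delete:
  assumes "A \<in> carrier_mat (Suc m) (Suc m)" "j < Suc m"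
  shows "mat_to_list (mat_delete A 0 j) = map (remove_nth j) (tl (mat_to_list A))"
proof -
  have "remove_nth j (map f [0..<Suc m]) = map (\<lambda>b. f (if b < j then b else Suc b)) [0..<m]"
    for f :: "nat \<Rightarrow> 'a"
    using assms(2)
    by (intro nth_equalityI) (auto simp: remove_nth_def nth_append min_def simp del: upt_Suc)
  moreover have "tl [0..<Suc m] = map Suc [0..<m]"
    by (simp add: map_Suc_upt upt_conv_Cons del: upt_Suc)
  ultimately show ?thesis
    using assms by (simp add: mat_to_list_def mat_delete_def map_tl[symmetric] o_def del: upt_Suc)
qed

lemma det_eq_det_list:
  assumes "A \<in> carrier_mat m m"
  shows "det A = det_list (mat_to_list A)"
  using assms
proof (induction m arbitrary: A)
  case 0
  then show ?case
    by (simp add: det_def mat_to_list_def)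
next
  case (Suc m)
  have rows: "mat_to_list A = map (\<lambda>j. A $$ (0, j)) [0..<Suc m] # tl (mat_to_list A)"
    using Suc.prems by (simp add: mat_to_list_def upt_conv_Cons del: upt_Suc)
  have minor: "mat_delete A 0 j \<in> carrier_mat m m" for j
    using mat_delete_carrier[OF Suc.prems] by simp
  have "det A = (\<Sum>j<Suc m. A $$ (0, j) * cofactor A 0 j)"
    using Suc.prems by (rule laplace_expansion_row) simp
  also have "\<dots> = (\<Sum>j<Suc m. (-1) ^ j * A $$ (0, j) * det_list (map (remove_nth j) (tl (mat_to_list A))))"
    using Suc.prems Suc.IH[OF minor]
    by (intro sum.cong) (simp_all add: cofactor_def mat_to_list_mat_delete)
  also have "\<dots> = det_list (mat_to_list A)"
    by (subst rows) (simp add: det_list.simps(2) sum_list_sum_nth atLeast0LessThan del: upt_Suc)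
  finally show ?case .
qed

(* Unfolding det_list through laplace_from lets simp expand an explicit matrix without list indexing. *)
definition laplace_from :: "nat \<Rightarrow> 'a::comm_ring_1 list \<Rightarrow> 'a list list \<Rightarrow> 'a" where
  "laplace_from j r rs =
     sum_list (map (\<lambda>i. (-1) ^ (i + j) * r ! i * det_list (map (remove_nth (i + j)) rs)) [0..<length r])"

lemma det_list_Cons_laplace_from: "det_list (r # rs) = laplace_from 0 r rs"
  by (simp add: det_list.simps(2) laplace_from_def)

lemma laplace_from_Nil: "laplace_from j [] rs = 0"
  by (simp add: laplace_from_def)

lemma laplace_from_Cons:
  "laplace_from j (a # r) rs = (-1) ^ j * a * det_list (map (remove_nth j) rs) + laplace_from (Suc j) r rs"
proof -
  have "[0..<length (a # r)] = 0 # map Suc [0..<length r]"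
    by (simp add: map_Suc_upt upt_conv_Cons del: upt_Suc)
  then show ?thesis
    by (simp add: laplace_from_def o_def)
qed

lemmas det_list_eval =
  det_list.simps(1) det_list_Cons_laplace_from laplace_from_Nil laplace_from_Cons
  remove_nth_def take.simps drop.simps list.map append.simps nat.case

lemmas det_list_sign_simps =
  power_0 power_Suc mult_1 mult_1_right mult_minus_left mult_minus_right minus_minus add_0_right

section \<open>The submatrices on B_1 and B_2\<close>

lemma poly_char_poly_mat:
  fixes f :: "nat \<times> nat \<Rightarrow> 'a::field"
  shows "poly (char_poly (mat m m f)) x = det (mat m m (\<lambda>(i, j). (if i = j then x else 0) - f (i, j)))"
proof -
  have "- char_matrix (mat m m f) x = mat m m (\<lambda>(i, j). (if i = j then x else 0) - f (i, j))"
    by (rule eq_matI) (auto simp: char_matrix_def)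
  then show ?thesis
    by (simp add: char_poly_matrix[of _ m])
qed

definition S1_char_mat :: "nat set list \<Rightarrow> real \<Rightarrow> real mat" where
  "S1_char_mat bs x = mat (length bs) (length bs)
     (\<lambda>(i, j). (if i = j then x else 0) - real (S1_steiner (bs ! i \<union> bs ! j)))"

lemma poly_char_poly_steiner2_submatrix_S1:
  assumes "3 \<le> n" "\<forall>P\<in>set bs. card P = 2 \<and> P \<subseteq> {0..<n}"
  shows "poly (char_poly (steiner2_submatrix (S1 n) bs)) x = det (S1_char_mat bs x)"
proof -
  have "steiner2_submatrix (S1 n) bs =
      mat (length bs) (length bs) (\<lambda>(i, j). real (S1_steiner (bs ! i \<union> bs ! j)))"
    unfolding steiner2_submatrix_def using assms
    by (intro cong_mat) (auto simp: steiner2_S1 nth_mem)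
  then show ?thesis
    by (simp add: poly_char_poly_mat S1_char_mat_def)
qed

lemma nth_B1_list:
  assumes "i < g + 6"
  shows "B1_list (g + 5) ! i = (if i < g + 4 then tree_edge (i + 1) else if i = g + 4 then {0, 2} else {1, 3})"
  using assms by (auto simp: B1_list_def nth_append)

lemma nth_B2_list:
  assumes "i < n + 1" "1 \<le> n"
  shows "B2_list n ! i = (if i < n - 1 then tree_edge (i + 1) else if i = n - 1 then {0, 2} else {3, 4})"
  using assms by (auto simp: B2_list_def nth_append)

(* x I minus the quotient matrix of D_2(S_{1,n-3})[B_1,B_1] for n = g + 5, in which the g + 1 twin
   edges {2,4}, ..., {2,n-1} are merged into the row and column of {2,4}; similarly for B_2 with
   n = g + 6 and the twins {2,5}, ..., {2,n-1}. *)
definition B1_quotient :: "nat \<Rightarrow> real \<Rightarrow> real list list" where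
  "B1_quotient g x =
     [[x - 1, -2, -3, -3 * (real g + 1), -2, -3],
      [-2, x - 1, -2, -2 * (real g + 1), -2, -2],
      [-3, -2, x - 1, -2 * (real g + 1), -3, -2],
      [-3, -2, -2, x + 1 - 2 * (real g + 1), -3, -3],
      [-2, -2, -3, -3 * (real g + 1), x - 2, -3],
      [-3, -2, -2, -3 * (real g + 1), -3, x - 2]]"

definition B2_quotient :: "nat \<Rightarrow> real \<Rightarrow> real list list" where
  "B2_quotient g x =
     [[x - 1, -2, -3, -3, -3 * (real g + 1), -2, -4],
      [-2, x - 1, -2, -2, -2 * (real g + 1), -2, -3],
      [-3, -2, x - 1, -2, -2 * (real g + 1), -3, -2],
      [-3, -2, -2, x - 1, -2 * (real g + 1), -3, -2],
      [-3, -2, -2, -2, x + 1 - 2 * (real g + 1), -3, -3],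
      [-2, -2, -3, -3, -3 * (real g + 1), x - 2, -4],
      [-4, -3, -2, -2, -3 * (real g + 1), -4, x - 2]]"

lemma det_list_B1_quotient: "det_list (B1_quotient g x) = poly (h1 (g + 5)) x"
  unfolding B1_quotient_def
  by (simp only: det_list_eval, simp only: det_list_sign_simps,
      simp add: h1_def algebra_simps power2_eq_square power3_eq_cube numeral_eq_Suc)

lemma det_list_B2_quotient: "det_list (B2_quotient g x) = (x + 1) * poly (h2 (g + 6)) x"
  unfolding B2_quotient_def
  by (simp only: det_list_eval, simp only: det_list_sign_simps,
      simp add: h2_def algebra_simps power2_eq_square power3_eq_cube numeral_eq_Suc)

lemma det_S1_char_mat_B1: "det (S1_char_mat (B1_list (g + 5)) x) = (x + 1) ^ g * det_list (B1_quotient g x)"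
proof -
  let ?p = "block_swap 4 g"
  define e where "e i j = (if i = j then x else 0) - real (S1_steiner (B1_list (g + 5) ! i \<union> B1_list (g + 5) ! j))"
    for i j
  note entry = e_def block_swap_def nth_B1_list tree_edge_def S1_steiner_def
  have "length (B1_list (g + 5)) = g + 6"
    by (simp add: B1_list_def)
  then have "det (S1_char_mat (B1_list (g + 5)) x) = det (mat (g + 6) (g + 6) (\<lambda>(i, j). e i j))"
    by (simp add: S1_char_mat_def e_def)
  also have "\<dots> = det (mat (g + 6) (g + 6) (\<lambda>(i, j). e (?p i) (?p j)))"
    by (rule det_mat_permute[symmetric], rule block_swap_permutes) simp
  also have "\<dots> = ((x - 1) - (-2)) ^ g * det (twin_quotient g 6 3 (x - 1) (-2) (\<lambda>i j. e (?p i) (?p j)))"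
  proof (rule det_twin_reduction)
    fix t assume t: "t < g"
    show "e (?p t) (?p u) = (if t = u then x - 1 else -2)" if "u < g" for u
      using t that by (simp add: entry)
    fix u :: nat assume "u < 6"
    then consider "u = 0" | "u = 1" | "u = 2" | "u = 3" | "u = 4" | "u = 5"
      by linarith
    then show "e (?p t) (?p (g + u)) = (if u = 3 then -2 else e (?p (g + 3)) (?p (g + u)))"
      and "e (?p (g + u)) (?p t) = (if u = 3 then -2 else e (?p (g + u)) (?p (g + 3)))"
      using t by (cases; simp add: entry)+
  qed (simp_all add: entry)
  also have "det (twin_quotient g 6 3 (x - 1) (-2) (\<lambda>i j. e (?p i) (?p j))) = det_list (B1_quotient g x)"
    by (simp add: twin_quotient_def det_eq_det_list[of _ 6] mat_to_list_def upt_rec entry B1_quotient_def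
        algebra_simps numeral_3_eq_3[symmetric])
  finally show ?thesis
    by (simp add: add.commute)
qed

lemma det_S1_char_mat_B2: "det (S1_char_mat (B2_list (g + 6)) x) = (x + 1) ^ g * det_list (B2_quotient g x)"
proof -
  let ?p = "block_swap 5 g"
  define e where "e i j = (if i = j then x else 0) - real (S1_steiner (B2_list (g + 6) ! i \<union> B2_list (g + 6) ! j))"
    for i j
  note entry = e_def block_swap_def nth_B2_list tree_edge_def S1_steiner_def card_insert_if
  have "length (B2_list (g + 6)) = g + 7"
    by (simp add: B2_list_def)
  then have "det (S1_char_mat (B2_list (g + 6)) x) = det (mat (g + 7) (g + 7) (\<lambda>(i, j). e i j))"
    by (simp add: S1_char_mat_def e_def)
  also have "\<dots> = det (mat (g + 7) (g + 7) (\<lambda>(i, j). e (?p i) (?p j)))"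
    by (rule det_mat_permute[symmetric], rule block_swap_permutes) simp
  also have "\<dots> = ((x - 1) - (-2)) ^ g * det (twin_quotient g 7 4 (x - 1) (-2) (\<lambda>i j. e (?p i) (?p j)))"
  proof (rule det_twin_reduction)
    fix t assume t: "t < g"
    show "e (?p t) (?p u) = (if t = u then x - 1 else -2)" if "u < g" for u
      using t that by (simp add: entry)
    fix u :: nat assume "u < 7"
    then consider "u = 0" | "u = 1" | "u = 2" | "u = 3" | "u = 4" | "u = 5" | "u = 6"
      by linarith
    then show "e (?p t) (?p (g + u)) = (if u = 4 then -2 else e (?p (g + 4)) (?p (g + u)))"
      and "e (?p (g + u)) (?p t) = (if u = 4 then -2 else e (?p (g + u)) (?p (g + 4)))"
      using t by (cases; simp add: entry)+
  qed (simp_all add: entry)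
  also have "det (twin_quotient g 7 4 (x - 1) (-2) (\<lambda>i j. e (?p i) (?p j))) = det_list (B2_quotient g x)"
    by (simp add: twin_quotient_def det_eq_det_list[of _ 7] mat_to_list_def upt_rec entry B2_quotient_def
        algebra_simps numeral_3_eq_3[symmetric])
  finally show ?thesis
    by (simp add: add.commute)
qed

lemma det_S1_char_mat_B2_5: "det (S1_char_mat (B2_list 5) x) = poly (h2 5) x"
proof -
  define e where "e i j = (if i = j then x else 0) - real (S1_steiner (B2_list 5 ! i \<union> B2_list 5 ! j))"
    for i j
  have "length (B2_list 5) = 6"
    by (simp add: B2_list_def)
  then have "det (S1_char_mat (B2_list 5) x) = det (mat 6 6 (\<lambda>(i, j). e i j))"
    by (simp add: S1_char_mat_def e_def)
  also have "\<dots> = det_list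
     [[x - 1, -2, -3, -3, -2, -4],
      [-2, x - 1, -2, -2, -2, -3],
      [-3, -2, x - 1, -2, -3, -2],
      [-3, -2, -2, x - 1, -3, -2],
      [-2, -2, -3, -3, x - 2, -4],
      [-4, -3, -2, -2, -4, x - 2]]"
    by (simp add: det_eq_det_list[of _ 6] mat_to_list_def upt_rec e_def nth_B2_list tree_edge_def
        S1_steiner_def card_insert_if algebra_simps numeral_3_eq_3[symmetric])
  also have "\<dots> = poly (h2 5) x"
    by (simp only: det_list_eval, simp only: det_list_sign_simps,
        simp add: h2_def algebra_simps power2_eq_square power3_eq_cube numeral_eq_Suc)
  finally show ?thesis .
qed

lemma poly_char_poly_B1:
  assumes "5 \<le> n"
  shows "poly (char_poly (steiner2_submatrix (S1 n) (B1_list n))) x = (x + 1) ^ (n - 5) * poly (h1 n) x"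
proof -
  obtain g where n: "n = g + 5"
    using assms by (metis le_add_diff_inverse2)
  have "poly (char_poly (steiner2_submatrix (S1 n) (B1_list n))) x = det (S1_char_mat (B1_list n) x)"
    using assms B1_list_pairs[of n] by (intro poly_char_poly_steiner2_submatrix_S1) simp_all
  also have "\<dots> = (x + 1) ^ g * poly (h1 n) x"
    unfolding n by (simp only: det_S1_char_mat_B1 det_list_B1_quotient)
  finally show ?thesis
    using n by simp
qed

lemma poly_char_poly_B2:
  assumes "5 \<le> n"
  shows "poly (char_poly (steiner2_submatrix (S1 n) (B2_list n))) x = (x + 1) ^ (n - 5) * poly (h2 n) x"
proof -
  have "poly (char_poly (steiner2_submatrix (S1 n) (B2_list n))) x = det (S1_char_mat (B2_list n) x)"
    using assms B2_list_pairs[of n] by (intro poly_char_poly_steiner2_submatrix_S1) simp_all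
  also have "\<dots> = (x + 1) ^ (n - 5) * poly (h2 n) x"
  proof (cases "n = 5")
    case True
    then show ?thesis
      by (simp only: det_S1_char_mat_B2_5) simp
  next
    case False
    with assms have "6 \<le> n"
      by simp
    then obtain g where n: "n = g + 6"
      by (metis le_add_diff_inverse2)
    then have "det (S1_char_mat (B2_list n) x) = (x + 1) ^ g * ((x + 1) * poly (h2 n) x)"
      by (simp only: det_S1_char_mat_B2 det_list_B2_quotient)
    with n show ?thesis
      by simp
  qed
  finally show ?thesis .
qed

theorem theorem5p5:
  fixes n :: nat
  assumes "n \<ge> 5"
  shows "char_poly (steiner2_submatrix (S1 n) (B1_list n)) = [:1, 1:] ^ (n - 5) * h1 n
       \<and> char_poly (steiner2_submatrix (S1 n) (B2_list n)) = [:1, 1:] ^ (n - 5) * h2 n"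
  by (intro conjI poly_ext)
    (simp_all add: poly_char_poly_B1[OF assms] poly_char_poly_B2[OF assms] add.commute)

end
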